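(* Assume $\mu$ satisfies (C). Let $S(\Gamma):=\{\log\lambda_{\mathbf a}:\mathbf a\in\Gamma,\ \mathbf a\text{ has all entries strictly positive}\}$, where $\lambda_{\mathbf a}$ is the Perron–Frobenius (dominant) eigenvalue of $\mathbf a$. If the additive subgroup of $\mathbb R$ generated by $S(\Gamma)$ is dense in $\mathbb R$, then $\mu$ is non-arithmetic.
   Context: Let $|\cdot|$ be a norm on $\mathbb R^d$. $\mu$ is a probability measure on real $d\times d$ matrices, $\Gamma$ the closed semigroup generated by $\operatorname{supp}\mu$. Condition (C): $\mu$ is supported on nonnegative matrices, every matrix of $\Gamma$ is allowable (each row and column has a positive entry), and $\Gamma$ contains a matrix with all entries strictly positive. $\mathcal S_+:=\{x\in\mathbb R^d:x_i\ge0,|x|=1\}$, $\mathbf a\cdot x:=\mathbf ax/|\mathbf ax|$, $V(\Gamma)$ = closure of the set of normalized Perron–Frobenius eigenvectors $v_{\mathbf a}\in\mathcal S_+$ of matrices $\mathbf a\in\Gamma$ with all entries positive. $\mu$ is arithmetic if there exist $t>0$, $\theta\in[0,2\pi)$ and a function $\vartheta:\mathcal S_+\to\mathbb R$ with $\exp(it\log|\mathbf ax|-i\theta+i(\vartheta(\mathbf a\cdot x)-\vartheta(x)))=1$ for all $\mathbf a\in\Gamma$, $x\in V(\Gamma)$; otherwise non-arithmetic. *)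

theory Defs
  imports "HOL-Probability.Probability"
begin

definition is_norm :: "(real^'d \<Rightarrow> real) \<Rightarrow> bool" where
  "is_norm N \<longleftrightarrow> (\<forall>x. N x \<ge> 0) \<and> (\<forall>x. N x = 0 \<longleftrightarrow> x = 0)
     \<and> (\<forall>c x. N (c *\<^sub>R x) = \<bar>c\<bar> * N x) \<and> (\<forall>x y. N (x + y) \<le> N x + N y)"

definition msupp :: "('a::topological_space) measure \<Rightarrow> 'a set" where
  "msupp M = {a. \<forall>U. open U \<longrightarrow> a \<in> U \<longrightarrow> emeasure M U > 0}"

inductive_set sgen :: "(real^'d^'d) set \<Rightarrow> (real^'d^'d) set" for A where
  base: "a \<in> A \<Longrightarrow> a \<in> sgen A"
| mult: "a \<in> sgen A \<Longrightarrow> b \<in> sgen A \<Longrightarrow> a ** b \<in> sgen A"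

definition Gam :: "(real^'d^'d) measure \<Rightarrow> (real^'d^'d) set" where
  "Gam M = closure (sgen (msupp M))"

definition nonneg_mat :: "real^'d^'d \<Rightarrow> bool" where
  "nonneg_mat a \<longleftrightarrow> (\<forall>i j. a $ i $ j \<ge> 0)"

definition pos_mat :: "real^'d^'d \<Rightarrow> bool" where
  "pos_mat a \<longleftrightarrow> (\<forall>i j. a $ i $ j > 0)"

definition allowable :: "real^'d^'d \<Rightarrow> bool" where
  "allowable a \<longleftrightarrow> (\<forall>i. \<exists>j. a $ i $ j > 0) \<and> (\<forall>j. \<exists>i. a $ i $ j > 0)"

definition cond_C :: "(real^'d^'d) measure \<Rightarrow> bool" where
  "cond_C M \<longleftrightarrow> (\<forall>a \<in> msupp M. nonneg_mat a) \<and> (\<forall>a \<in> Gam M. allowable a)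
     \<and> (\<exists>a \<in> Gam M. pos_mat a)"

definition S_plus :: "(real^'d \<Rightarrow> real) \<Rightarrow> (real^'d) set" where
  "S_plus N = {x. (\<forall>i. x $ i \<ge> 0) \<and> N x = 1}"

definition act :: "(real^'d \<Rightarrow> real) \<Rightarrow> real^'d^'d \<Rightarrow> real^'d \<Rightarrow> real^'d" where
  "act N a x = (1 / N (a *v x)) *\<^sub>R (a *v x)"

definition cplx_eigenvalue :: "real^'d^'d \<Rightarrow> complex \<Rightarrow> bool" where
  "cplx_eigenvalue a c \<longleftrightarrow> (\<exists>z::complex^'d. z \<noteq> 0 \<and>
      (\<chi> i. \<Sum>j\<in>UNIV. complex_of_real (a $ i $ j) * z $ j) = (\<chi> i. c * z $ i))"

definition pf_eigenvalue :: "real^'d^'d \<Rightarrow> real" where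
  "pf_eigenvalue a = (THE l. cplx_eigenvalue a (complex_of_real l) \<and>
      (\<forall>c. cplx_eigenvalue a c \<longrightarrow> cmod c \<le> l))"

definition pf_vector :: "(real^'d \<Rightarrow> real) \<Rightarrow> real^'d^'d \<Rightarrow> real^'d" where
  "pf_vector N a = (THE v. v \<in> S_plus N \<and> a *v v = pf_eigenvalue a *\<^sub>R v)"

definition V_Gam :: "(real^'d \<Rightarrow> real) \<Rightarrow> (real^'d^'d) measure \<Rightarrow> (real^'d) set" where
  "V_Gam N M = closure {pf_vector N a | a. a \<in> Gam M \<and> pos_mat a}"

definition arithmetic :: "(real^'d \<Rightarrow> real) \<Rightarrow> (real^'d^'d) measure \<Rightarrow> bool" where
  "arithmetic N M \<longleftrightarrow> (\<exists>t \<theta> (phi::real^'d \<Rightarrow> real). t > 0 \<and> 0 \<le> \<theta> \<and> \<theta> < 2 * pi \<and>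
     (\<forall>a \<in> Gam M. \<forall>x \<in> V_Gam N M.
        exp (\<i> * complex_of_real (t * ln (N (a *v x)) - \<theta> + (phi (act N a x) - phi x))) = 1))"

definition S_Gam :: "(real^'d^'d) measure \<Rightarrow> real set" where
  "S_Gam M = {ln (pf_eigenvalue a) | a. a \<in> Gam M \<and> pos_mat a}"

definition add_subgroup_gen :: "real set \<Rightarrow> real set" where
  "add_subgroup_gen S = \<Inter>{G. S \<subseteq> G \<and> 0 \<in> G \<and> (\<forall>x\<in>G. \<forall>y\<in>G. x + y \<in> G) \<and> (\<forall>x\<in>G. - x \<in> G)}"

end

theory Submission
  imports Defs
begin

(* Suppose mu were arithmetic with data t > 0, theta, phi.
   For a strictly positive a in Gamma, its normalised Perron-Frobenius vector v lies
   in V(Gamma) and is fixed by the projective action of a and of a**a (Gamma is a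
   semigroup), with |a v| = lambda_a and |(a**a) v| = lambda_a^2.  The arithmeticity
   identity for a and for a**a at x = v therefore reads
   exp(i(t log lambda_a - theta)) = 1 = exp(i(2 t log lambda_a - theta)), whence
   exp(i t log lambda_a) = 1.  So S(Gamma) lies in {s. exp(i t s) = 1}, a closed
   additive subgroup of R; it then contains the closure of the group generated by
   S(Gamma), which is all of R by hypothesis -- but pi/t is not in it. *)

text \<open>Gamma is the closure of a multiplicatively closed set, and matrix multiplication
  is continuous, so Gamma is itself closed under multiplication.\<close>
lemma Gam_mult:
  assumes "a \<in> Gam M" "b \<in> Gam M"
  shows "a ** b \<in> Gam M"
proof -
  let ?S = "sgen (msupp M)"
  have cont: "continuous_on UNIV (\<lambda>p::(real^'d^'d) \<times> (real^'d^'d). fst p ** snd p)"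
    unfolding matrix_matrix_mult_def by (intro continuous_intros)
  have "(\<lambda>p. fst p ** snd p) ` closure (?S \<times> ?S) \<subseteq> closure ?S"
    by (rule image_closure_subset)
       (use cont continuous_on_subset closure_subset sgen.mult in fastforce)+
  moreover have "(a, b) \<in> closure (?S \<times> ?S)"
    using assms by (simp add: closure_Times Gam_def)
  ultimately show ?thesis unfolding Gam_def by force
qed

section \<open>Perron--Frobenius theory of strictly positive matrices\<close>

lemma pos_mat_mult_pos:
  fixes a :: "real^'d^'d" and x :: "real^'d"
  assumes "pos_mat a" "\<forall>i. 0 \<le> x$i" "x$j > 0"
  shows "(a *v x)$i > 0"
proof -
  have "(a *v x)$i = (\<Sum>k\<in>UNIV. a$i$k * x$k)" by (simp add: matrix_vector_mult_def)
  also have "\<dots> > 0"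
  proof (rule sum_pos2[where i=j])
    show "0 < a$i$j * x$j" using assms unfolding pos_mat_def by simp
    show "\<And>k. k \<in> UNIV \<Longrightarrow> 0 \<le> a$i$k * x$k"
      using assms unfolding pos_mat_def by (simp add: less_imp_le)
  qed auto
  finally show ?thesis .
qed

text \<open>The probability simplex in R^d: the domain on which Brouwer's theorem produces
  a Perron eigenvector.\<close>
definition prob_simplex :: "(real^'d) set" where
  "prob_simplex = {x. (\<forall>i. 0 \<le> x$i) \<and> (\<Sum>i\<in>UNIV. x$i) = 1}"

lemma mem_prob_simplex: "x \<in> prob_simplex \<longleftrightarrow> (\<forall>i. 0 \<le> x$i) \<and> (\<Sum>i\<in>UNIV. x$i) = 1"
  by (simp add: prob_simplex_def)

lemma prob_simplex_has_pos:
  assumes "x \<in> prob_simplex"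
  obtains j where "x$j > 0"
proof -
  have "\<not> (\<forall>j. x$j = 0)"
  proof
    assume "\<forall>j. x$j = 0"
    then have "(\<Sum>i\<in>UNIV. x$i) = 0" by simp
    then show False using assms by (simp add: mem_prob_simplex)
  qed
  then obtain j where "x$j \<noteq> 0" by blast
  moreover have "x$j \<ge> 0" using assms by (simp add: mem_prob_simplex)
  ultimately have "x$j > 0" by simp
  then show ?thesis by (rule that)
qed

lemma prob_simplex_compact: "compact (prob_simplex :: (real^'d) set)"
proof -
  have "closed prob_simplex" unfolding prob_simplex_def
    by (intro closed_Collect_conj closed_Collect_all closed_Collect_le closed_Collect_eq
        continuous_intros)
  moreover have "prob_simplex \<subseteq> cball (0::real^'d) (real CARD('d))"
  proof
    fix x :: "real^'d" assume x: "x \<in> prob_simplex"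
    have "\<bar>x$i\<bar> \<le> 1" for i
    proof -
      have "x$i \<le> (\<Sum>i\<in>UNIV. x$i)"
        by (rule member_le_sum) (use x in \<open>auto simp: mem_prob_simplex\<close>)
      then show ?thesis using x by (simp add: mem_prob_simplex)
    qed
    then have "(\<Sum>i\<in>UNIV. \<bar>x$i\<bar>) \<le> (\<Sum>i\<in>(UNIV::'d set). 1)"
      by (intro sum_mono) auto
    then show "x \<in> cball 0 (real CARD('d))"
      using norm_le_l1_cart[of x] by simp
  qed
  ultimately show ?thesis
    using bounded_cball bounded_subset compact_eq_bounded_closed by blast
qed

lemma prob_simplex_convex: "convex (prob_simplex :: (real^'d) set)"
  unfolding convex_def
proof (intro ballI allI impI)
  fix x y :: "real^'d" and u v :: real
  assume x: "x \<in> prob_simplex" and y: "y \<in> prob_simplex"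
    and uv: "0 \<le> u" "0 \<le> v" "u + v = 1"
  have "(\<Sum>i\<in>UNIV. (u *\<^sub>R x + v *\<^sub>R y) $ i) = u * (\<Sum>i\<in>UNIV. x$i) + v * (\<Sum>i\<in>UNIV. y$i)"
    by (simp add: sum.distrib sum_distrib_left)
  then show "u *\<^sub>R x + v *\<^sub>R y \<in> prob_simplex"
    using x y uv by (simp add: mem_prob_simplex)
qed

lemma prob_simplex_nonempty: "(prob_simplex :: (real^'d) set) \<noteq> {}"
proof -
  have "(\<chi> i::'d. 1 / real CARD('d)) \<in> prob_simplex" by (simp add: mem_prob_simplex)
  then show ?thesis by blast
qed

text \<open>It is a fixed point of the
  normalised map x \<mapsto> a x / (sum of entries of a x) on the simplex.\<close>
lemma perron_eigenvector_exists:
  fixes a :: "real^'d^'d"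
  assumes "pos_mat a"
  obtains l v where "l > 0" "\<forall>i. v$i > 0" "a *v v = l *\<^sub>R v"
proof -
  define f where "f x = (1 / (\<Sum>i\<in>UNIV. (a *v x)$i)) *\<^sub>R (a *v x)" for x
  have ax: "(a *v x)$i > 0" if x: "x \<in> prob_simplex" for x i
  proof -
    obtain j where "x$j > 0" using prob_simplex_has_pos[OF x] by blast
    then show ?thesis using x pos_mat_mult_pos[OF assms] by (simp add: mem_prob_simplex)
  qed
  have sum_pos: "(\<Sum>i\<in>UNIV. (a *v x)$i) > 0" if "x \<in> prob_simplex" for x
    using ax[OF that] by (simp add: sum_pos)
  have "continuous_on prob_simplex f" unfolding f_def
    by (intro continuous_intros) (use sum_pos in force)
  moreover have "f \<in> prob_simplex \<rightarrow> prob_simplex"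
  proof
    fix x :: "real^'d" assume x: "x \<in> prob_simplex"
    have "\<forall>i. 0 \<le> f x $ i"
      unfolding f_def using ax[OF x] sum_pos[OF x] by (simp add: less_imp_le)
    moreover have "(\<Sum>i\<in>UNIV. f x $ i) = 1"
      unfolding f_def using sum_pos[OF x] by (simp add: sum_divide_distrib[symmetric])
    ultimately show "f x \<in> prob_simplex" by (simp add: mem_prob_simplex)
  qed
  ultimately obtain x where x: "x \<in> prob_simplex" "f x = x"
    using brouwer prob_simplex_compact prob_simplex_convex prob_simplex_nonempty by blast
  define l where "l = (\<Sum>i\<in>UNIV. (a *v x)$i)"
  have l: "l > 0" using sum_pos[OF x(1)] l_def by simp
  have "a *v x = l *\<^sub>R ((1 / l) *\<^sub>R (a *v x))" using l by simp
  then have eq: "a *v x = l *\<^sub>R x" using x(2) unfolding f_def l_def[symmetric] by simp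
  have "x$i > 0" for i
    using ax[OF x(1), of i] l eq by (simp add: zero_less_mult_iff)
  then show ?thesis using that l eq by blast
qed

text \<open>Compare the eigenvector equation
  at the index where |z_j| / w_j is maximal.\<close>
lemma perron_eigenvalue_dominates:
  fixes a :: "real^'d^'d"
  assumes pa: "pos_mat a" and w: "\<forall>i. w$i > 0" and aw: "a *v w = l *\<^sub>R w"
    and ce: "cplx_eigenvalue a c"
  shows "cmod c \<le> l"
proof -
  obtain z :: "complex^'d" where z0: "z \<noteq> 0"
    and eq: "(\<chi> i. \<Sum>j\<in>UNIV. complex_of_real (a $ i $ j) * z $ j) = (\<chi> i. c * z $ i)"
    using ce unfolding cplx_eigenvalue_def by blast
  have hz: "(\<Sum>j\<in>UNIV. complex_of_real (a $ i $ j) * z $ j) = c * z $ i" for i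
    using eq by (simp add: vec_eq_iff)
  define r where "r j = cmod (z$j) / w$j" for j
  have "Max (range r) \<in> range r" by (rule Max_in) auto
  then obtain k where k: "Max (range r) = r k" by blast
  have rle: "r j \<le> r k" for j unfolding k[symmetric] by (rule Max_ge) auto
  obtain j0 where "z$j0 \<noteq> 0" using z0 by (metis vec_eq_iff zero_index)
  then have "r j0 > 0" unfolding r_def using w by simp
  then have "r k > 0" using rle[of j0] by simp
  moreover have zk: "cmod (z$k) = r k * w$k"
    unfolding r_def using w by (simp add: less_imp_neq[symmetric])
  ultimately have zk_pos: "cmod (z$k) > 0" using w by simp
  have zj: "cmod (z$j) \<le> r k * w$j" for j
    using rle[of j] w unfolding r_def by (simp add: divide_le_eq mult.commute)
  have "cmod c * cmod (z$k) = cmod (\<Sum>j\<in>UNIV. complex_of_real (a $ k $ j) * z $ j)"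
    using hz[of k] by (simp add: norm_mult)
  also have "\<dots> \<le> (\<Sum>j\<in>UNIV. cmod (complex_of_real (a $ k $ j) * z $ j))"
    by (rule norm_sum)
  also have "\<dots> = (\<Sum>j\<in>UNIV. a $ k $ j * cmod (z $ j))"
    using pa unfolding pos_mat_def by (simp add: norm_mult less_imp_le)
  also have "\<dots> \<le> (\<Sum>j\<in>UNIV. a $ k $ j * (r k * w$j))"
    using pa zj unfolding pos_mat_def by (intro sum_mono mult_left_mono) (auto simp: less_imp_le)
  also have "\<dots> = r k * (a *v w)$k"
    by (simp add: matrix_vector_mult_def sum_distrib_left mult_ac)
  also have "\<dots> = l * cmod (z$k)" using aw zk by simp
  finally show ?thesis using zk_pos by simp
qed

lemma real_eigenvector_cplx_eigenvalue:
  fixes a :: "real^'d^'d"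
  assumes "w \<noteq> 0" "a *v w = l *\<^sub>R w"
  shows "cplx_eigenvalue a (complex_of_real l)"
  unfolding cplx_eigenvalue_def
proof (intro exI conjI)
  let ?z = "\<chi> i. complex_of_real (w$i)"
  show "?z \<noteq> 0" using assms(1) by (simp add: vec_eq_iff)
  have "(\<Sum>j\<in>UNIV. complex_of_real (a $ i $ j) * ?z $ j) = complex_of_real ((a *v w)$i)" for i
    by (simp add: matrix_vector_mult_def)
  then show "(\<chi> i. \<Sum>j\<in>UNIV. complex_of_real (a $ i $ j) * ?z $ j) = (\<chi> i. complex_of_real l * ?z $ i)"
    using assms(2) by (simp add: vec_eq_iff)
qed

lemma pf_eigenvalue_eq:
  fixes a :: "real^'d^'d"
  assumes pa: "pos_mat a" and w: "\<forall>i. w$i > 0" and aw: "a *v w = l *\<^sub>R w"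
  shows "pf_eigenvalue a = l"
  unfolding pf_eigenvalue_def
proof (rule the_equality)
  have "w \<noteq> 0" using w by (metis less_irrefl zero_index)
  then have ce: "cplx_eigenvalue a (complex_of_real l)"
    using aw by (rule real_eigenvector_cplx_eigenvalue)
  then show "cplx_eigenvalue a (complex_of_real l) \<and> (\<forall>c. cplx_eigenvalue a c \<longrightarrow> cmod c \<le> l)"
    using perron_eigenvalue_dominates[OF pa w aw] by blast
  fix l' assume h: "cplx_eigenvalue a (complex_of_real l') \<and> (\<forall>c. cplx_eigenvalue a c \<longrightarrow> cmod c \<le> l')"
  have "\<bar>l\<bar> \<le> l'" using h ce by fastforce
  moreover have "\<bar>l'\<bar> \<le> l" using perron_eigenvalue_dominates[OF pa w aw] h by fastforce
  ultimately show "l' = l" by linarith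
qed

lemma pf_eigenvalue_pos_eigenvector:
  fixes a :: "real^'d^'d"
  assumes "pos_mat a"
  shows "pf_eigenvalue a > 0" "\<exists>w. (\<forall>i. w$i > 0) \<and> a *v w = pf_eigenvalue a *\<^sub>R w"
proof -
  obtain l w where "l > 0" "\<forall>i. w$i > 0" "a *v w = l *\<^sub>R w"
    using perron_eigenvector_exists[OF assms] .
  moreover have "pf_eigenvalue a = l" using pf_eigenvalue_eq[OF assms] calculation by blast
  ultimately show "pf_eigenvalue a > 0" "\<exists>w. (\<forall>i. w$i > 0) \<and> a *v w = pf_eigenvalue a *\<^sub>R w"
    by auto
qed

lemma nonneg_eigenvector_pos:
  fixes a :: "real^'d^'d"
  assumes pa: "pos_mat a" and nn: "\<forall>i. 0 \<le> u$i" and u0: "u \<noteq> 0" and au: "a *v u = l *\<^sub>R u"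
  shows "l > 0" "\<forall>i. u$i > 0"
proof -
  obtain j where "u$j \<noteq> 0" using u0 by (metis vec_eq_iff zero_index)
  then have uj: "u$j > 0" using nn by (simp add: order_le_neq_trans)
  have p: "(l *\<^sub>R u)$i > 0" for i using pos_mat_mult_pos[OF pa nn uj, of i] au by simp
  then show l: "l > 0" using uj p[of j] by (simp add: zero_less_mult_iff)
  show "\<forall>i. u$i > 0" using p l by (simp add: zero_less_mult_iff)
qed

text \<open>Subtracting the largest multiple of u below v leaves a nonnegative
  eigenvector with a zero entry, which must vanish.\<close>
lemma nonneg_eigenvector_unique:
  fixes a :: "real^'d^'d"
  assumes pa: "pos_mat a" and N: "is_norm N" and u: "u \<in> S_plus N" and v: "v \<in> S_plus N"
    and au: "a *v u = l *\<^sub>R u" and av: "a *v v = l *\<^sub>R v"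
  shows "u = v"
proof -
  have nonzero: "x \<noteq> 0" if x: "x \<in> S_plus N" for x
  proof
    assume "x = 0"
    then have "N x = 0" using N unfolding is_norm_def by blast
    then show False using x unfolding S_plus_def by simp
  qed
  have up: "\<forall>i. u$i > 0"
    using nonneg_eigenvector_pos[OF pa _ nonzero[OF u] au] u unfolding S_plus_def by blast
  have vp: "\<forall>i. v$i > 0"
    using nonneg_eigenvector_pos[OF pa _ nonzero[OF v] av] v unfolding S_plus_def by blast
  define r where "r i = v$i / u$i" for i
  have "Min (range r) \<in> range r" by (rule Min_in) auto
  then obtain k where k: "Min (range r) = r k" by blast
  have rle: "r k \<le> r j" for j unfolding k[symmetric] by (rule Min_le) auto
  define w where "w = v - r k *\<^sub>R u"
  have wnn: "\<forall>i. 0 \<le> w$i"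
    using rle up unfolding w_def r_def by (simp add: le_divide_eq)
  have wk: "w$k = 0" unfolding w_def r_def using up by (simp add: less_imp_neq[symmetric])
  have aw: "a *v w = l *\<^sub>R w" unfolding w_def using au av
    by (simp add: matrix_vector_mult_diff_distrib matrix_vector_mult_scaleR scaleR_diff_right)
  have "w = 0"
  proof (rule ccontr)
    assume "w \<noteq> 0"
    then have "w$k > 0" using nonneg_eigenvector_pos(2)[OF pa wnn _ aw] by blast
    then show False using wk by simp
  qed
  then have vs: "v = r k *\<^sub>R u" unfolding w_def by simp
  have "r k > 0" unfolding r_def using up vp by simp
  moreover have "N v = \<bar>r k\<bar> * N u" using vs N unfolding is_norm_def by simp
  ultimately have "r k = 1" using u v unfolding S_plus_def by simp
  then show ?thesis using vs by simp
qed

lemma pf_vector_props: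
  fixes a :: "real^'d^'d"
  assumes pa: "pos_mat a" and N: "is_norm N"
  shows "pf_vector N a \<in> S_plus N \<and> a *v pf_vector N a = pf_eigenvalue a *\<^sub>R pf_vector N a"
  unfolding pf_vector_def
proof (rule theI')
  obtain w where w: "\<forall>i. w$i > 0" and aw: "a *v w = pf_eigenvalue a *\<^sub>R w"
    using pf_eigenvalue_pos_eigenvector(2)[OF pa] by blast
  have "w \<noteq> 0" using w by (metis less_irrefl zero_index)
  then have Nw: "N w > 0" using N unfolding is_norm_def by (simp add: order_le_neq_trans)
  define v where "v = (1 / N w) *\<^sub>R w"
  have "v \<in> S_plus N" unfolding S_plus_def v_def using Nw w N \<open>w \<noteq> 0\<close>
    by (simp add: is_norm_def less_imp_le)
  moreover have "a *v v = pf_eigenvalue a *\<^sub>R v" unfolding v_def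
    using aw by (simp add: matrix_vector_mult_scaleR)
  ultimately show "\<exists>!v. v \<in> S_plus N \<and> a *v v = pf_eigenvalue a *\<^sub>R v"
    using nonneg_eigenvector_unique[OF pa N] by blast
qed

section \<open>Arithmeticity forces a lattice of eigenvalue logarithms\<close>

lemma eigenvector_cocycle:
  assumes N: "is_norm N" and v: "v \<in> S_plus N" and av: "a *v v = l *\<^sub>R v" and l: "l > 0"
  shows "N (a *v v) = l" "act N a v = v"
proof -
  show Nav: "N (a *v v) = l" using av v l N unfolding S_plus_def is_norm_def by simp
  show "act N a v = v" unfolding act_def using Nav av l by simp
qed

lemma exp_i_add:
  "exp (\<i> * complex_of_real (x + y)) = exp (\<i> * complex_of_real x) * exp (\<i> * complex_of_real y)"
  by (simp add: distrib_left exp_add)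

text \<open>Evaluate the
  identity at the Perron vector of a for the matrices a and a ** a; the phi-terms
  cancel and the two identities differ by exactly exp(i t log lambda_a).\<close>
lemma arithmetic_pf_eigenvalue:
  assumes N: "is_norm N" and aG: "a \<in> Gam M" and pa: "pos_mat a"
    and H: "\<And>b x. b \<in> Gam M \<Longrightarrow> x \<in> V_Gam N M \<Longrightarrow>
        exp (\<i> * complex_of_real (t * ln (N (b *v x)) - \<theta> + (phi (act N b x) - phi x))) = 1"
  shows "exp (\<i> * complex_of_real (t * ln (pf_eigenvalue a))) = 1"
proof -
  define l where "l = pf_eigenvalue a"
  define v where "v = pf_vector N a"
  have l: "l > 0" using pf_eigenvalue_pos_eigenvector(1)[OF pa] l_def by simp
  have v: "v \<in> S_plus N" and av: "a *v v = l *\<^sub>R v"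
    using pf_vector_props[OF pa N] v_def l_def by auto
  have vV: "v \<in> V_Gam N M" unfolding V_Gam_def v_def
    using aG pa by (intro subsetD[OF closure_subset]) blast
  have aav: "(a ** a) *v v = (l * l) *\<^sub>R v"
    by (simp add: matrix_vector_mul_assoc[symmetric] av matrix_vector_mult_scaleR)
  have h1: "exp (\<i> * complex_of_real (t * ln l - \<theta>)) = 1"
    using H[OF aG vV] eigenvector_cocycle[OF N v av l] by simp
  have h2: "exp (\<i> * complex_of_real (t * ln (l * l) - \<theta>)) = 1"
    using H[OF Gam_mult[OF aG aG] vV] eigenvector_cocycle[OF N v aav] l by simp
  have "t * ln (l * l) - \<theta> = (t * ln l - \<theta>) + t * ln l"
    using l by (simp add: ln_mult algebra_simps)
  then have "exp (\<i> * complex_of_real (t * ln (l * l) - \<theta>)) =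
      exp (\<i> * complex_of_real (t * ln l - \<theta>)) * exp (\<i> * complex_of_real (t * ln l))"
    by (simp only: exp_i_add)
  then show ?thesis using h1 h2 l_def by simp
qed

section \<open>Closed subgroups of R\<close>

lemma add_subgroup_gen_least:
  assumes "S \<subseteq> G" "0 \<in> G" "\<And>x y. x \<in> G \<Longrightarrow> y \<in> G \<Longrightarrow> x + y \<in> G" "\<And>x. x \<in> G \<Longrightarrow> - x \<in> G"
  shows "add_subgroup_gen S \<subseteq> G"
  unfolding add_subgroup_gen_def using assms by (intro Inter_lower) blast

lemma character_kernel_subgroup:
  fixes t :: real
  defines "K \<equiv> {s. exp (\<i> * complex_of_real (t * s)) = 1}"
  shows "closed K" "0 \<in> K" "x \<in> K \<Longrightarrow> y \<in> K \<Longrightarrow> x + y \<in> K" "x \<in> K \<Longrightarrow> - x \<in> K"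
proof -
  show "closed K" unfolding K_def by (intro closed_Collect_eq continuous_intros)
  show "0 \<in> K" unfolding K_def by simp
  show "x \<in> K \<Longrightarrow> y \<in> K \<Longrightarrow> x + y \<in> K"
    unfolding K_def using exp_i_add[of "t * x" "t * y"] by (simp add: distrib_left)
  have "exp (\<i> * complex_of_real (t * - x)) = inverse (exp (\<i> * complex_of_real (t * x)))"
    by (simp add: exp_minus[symmetric])
  then show "x \<in> K \<Longrightarrow> - x \<in> K" unfolding K_def by simp
qed

theorem lemma2p4:
  fixes N :: "real^'d \<Rightarrow> real" and \<mu> :: "(real^'d^'d) measure"
  assumes "is_norm N"
    and "prob_space \<mu>" and "sets \<mu> = sets borel"
    and "cond_C \<mu>"
    and "closure (add_subgroup_gen (S_Gam \<mu>)) = UNIV"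
  shows "\<not> arithmetic N \<mu>"
proof
  assume "arithmetic N \<mu>"
  then obtain t \<theta> and phi :: "real^'d \<Rightarrow> real" where t: "t > 0" and
    H: "\<And>a x. a \<in> Gam \<mu> \<Longrightarrow> x \<in> V_Gam N \<mu> \<Longrightarrow>
        exp (\<i> * complex_of_real (t * ln (N (a *v x)) - \<theta> + (phi (act N a x) - phi x))) = 1"
    unfolding arithmetic_def by blast
  define K where "K = {s. exp (\<i> * complex_of_real (t * s)) = 1}"
  have "S_Gam \<mu> \<subseteq> K"
    using arithmetic_pf_eigenvalue[OF assms(1) _ _ H] unfolding S_Gam_def K_def by blast
  then have "add_subgroup_gen (S_Gam \<mu>) \<subseteq> K"
    unfolding K_def by (rule add_subgroup_gen_least[OF _ character_kernel_subgroup(2-4)])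
  then have "closure (add_subgroup_gen (S_Gam \<mu>)) \<subseteq> K"
    using character_kernel_subgroup(1)[of t] unfolding K_def by (rule closure_minimal)
  then have "pi / t \<in> K" using assms(5) by blast
  then show False unfolding K_def using t by simp
qed

end
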